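(* Let $S$ be a linearly dependent set of permutations, each of order larger than one. Then: (a) $S$ is not a singleton; (b) if $|S|=2$, then both permutations in $S$ have order two; (c) if $|S|=3$ and all permutations in $S$ have the same order, then this common order is three.
   Context: A $k$-permutation is a bijection of $[k]=\{1,\dots,k\}$. The gradient polynomial of a $k$-permutation $\pi$ is $P_\pi(\alpha,\beta)=k!\sum_{m\in[k]}\left(\frac{k-m}{1-\alpha}-\frac{m-1}{\alpha}\right)\left(\frac{k-\pi(m)}{1-\beta}-\frac{\pi(m)-1}{\beta}\right)\frac{\alpha^{m-1}(1-\alpha)^{k-m}\beta^{\pi(m)-1}(1-\beta)^{k-\pi(m)}}{(m-1)!(k-m)!(\pi(m)-1)!(k-\pi(m))!}$. A set $S$ of (distinct) permutations is called linearly dependent if the gradient polynomials $P_\pi$, $\pi\in S$, are linearly dependent over $\mathbb{R}$, i.e., there are reals $t_\pi$, not all zero, with $\sum_{\pi\in S}t_\pi P_\pi=0$. *)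

theory Defs
  imports Complex_Main "HOL-Combinatorics.Permutations"
begin

text \<open>A permutation is represented as a pair (k, pi): its order k and a bijection
  pi of {1..k} (identity outside {1..k}, so pi is uniquely determined).\<close>

type_synonym kperm = "nat \<times> (nat \<Rightarrow> nat)"

definition is_kperm :: "kperm \<Rightarrow> bool" where
  "is_kperm p \<longleftrightarrow> snd p permutes {1..fst p}"

definition grad_poly :: "kperm \<Rightarrow> real \<Rightarrow> real \<Rightarrow> real" where
  "grad_poly p \<alpha> \<beta> =
    (let k = fst p; \<pi> = snd p in
     fact k * (\<Sum>m\<in>{1..k}.
        (real (k - m) / (1 - \<alpha>) - real (m - 1) / \<alpha>)
      * (real (k - \<pi> m) / (1 - \<beta>) - real (\<pi> m - 1) / \<beta>)
      * (\<alpha> ^ (m - 1) * (1 - \<alpha>) ^ (k - m) * \<beta> ^ (\<pi> m - 1) * (1 - \<beta>) ^ (k - \<pi> m))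
      / (fact (m - 1) * fact (k - m) * fact (\<pi> m - 1) * fact (k - \<pi> m))))"

text \<open>Since the
  defining expression is a polynomial that is only literally defined for
  0 < alpha, beta < 1, identity of polynomials is tested on the open unit square
  (two polynomials agreeing on a nonempty open set are equal).\<close>

definition lin_dep :: "kperm set \<Rightarrow> bool" where
  "lin_dep S \<longleftrightarrow> (\<exists>t :: kperm \<Rightarrow> real. (\<exists>p\<in>S. t p \<noteq> 0) \<and>
     (\<forall>\<alpha> \<beta>. 0 < \<alpha> \<and> \<alpha> < 1 \<and> 0 < \<beta> \<and> \<beta> < 1 \<longrightarrow>
        (\<Sum>p\<in>S. t p * grad_poly p \<alpha> \<beta>) = 0))"

end

theory Submission
  imports Defs "HOL-Computational_Algebra.Polynomial"
begin

text \<open>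
  The m-th summand of the gradient polynomial of pi factors as D_m(alpha) * D_(pi m)(beta), where
  D_m = grad_basis k m is the derivative of a^(m-1) (1-a)^(k-m) / ((m-1)! (k-m)!), i.e. the
  difference of two consecutive Bernstein polynomials of degree k - 2. Bernstein polynomials are
  linearly independent, so the only linear relation among D_1, ..., D_k is that they sum to zero.

  For permutations of one order k, a relation sum t_pi P_pi = 0 thus says that the matrix
  X = sum t_pi (permutation matrix of pi) has the form u_m + v_j. All row and column sums of X equal
  sum t_pi, so X is constant, and if |S| < k some entry of X is zero, hence X = 0. A vanishing
  combination of at most three distinct permutation matrices is trivial: every permutation with
  nonzero coefficient would have to agree at each position with another such permutation, and
  this needs at least four of them.

  For orders k < l, the coefficient of alpha^(l-2) only involves the permutation of order l and
  gives a relation among the top coefficients of D_1, ..., D_l, which are not all equal for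
  l >= 3. Finally, there are only two permutations of order 2.
\<close>

section \<open>Bernstein polynomials and the gradient basis\<close>

(* bernstein_poly k j is the Bernstein basis polynomial of degree k - 2 and index j - 1,
   divided by (k - 2)!; it is zero unless 1 <= j < k. *)
definition bernstein_poly :: "nat \<Rightarrow> nat \<Rightarrow> real poly" where
  "bernstein_poly k j = (if 1 \<le> j \<and> j < k
     then smult (1 / (fact (j - 1) * fact (k - 1 - j))) (monom 1 (j - 1) * [:1, -1:] ^ (k - 1 - j))
     else 0)"

definition grad_basis :: "nat \<Rightarrow> nat \<Rightarrow> real poly" where
  "grad_basis k m = bernstein_poly k m - bernstein_poly k (m - 1)"

lemma poly_bernstein_poly:
  "poly (bernstein_poly k j) a =
     (if 1 \<le> j \<and> j < k then a ^ (j - 1) * (1 - a) ^ (k - 1 - j) / (fact (j - 1) * fact (k - 1 - j)) else 0)"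
  by (simp add: bernstein_poly_def poly_monom)

lemma coeff_bernstein_poly:
  assumes "1 \<le> j" "j < k"
  shows "coeff (bernstein_poly k j) i =
    (if i < j - 1 then 0 else coeff ([:1, -1:] ^ (k - 1 - j)) (i - (j - 1)) / (fact (j - 1) * fact (k - 1 - j)))"
  using assms by (simp add: bernstein_poly_def coeff_monom_mult)

lemma coeff_bernstein_poly_lowest_neq_0:
  assumes "1 \<le> j" "j < k"
  shows "coeff (bernstein_poly k j) (j - 1) \<noteq> 0"
  using assms by (simp add: coeff_bernstein_poly coeff_0_power)

lemma degree_bernstein_poly_le: "degree (bernstein_poly k j) \<le> k - 2"
proof (cases "1 \<le> j \<and> j < k")
  case True
  have "degree (monom (1::real) (j - 1) * [:1, -1:] ^ (k - 1 - j)) \<le> (j - 1) + (k - 1 - j)"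
    by (rule order.trans[OF degree_mult_le add_mono[OF degree_monom_le]])
       (rule order.trans[OF degree_power_le], simp)
  then show ?thesis
    using True degree_smult_le[of "1 / (fact (j - 1) * fact (k - 1 - j))" "monom (1::real) (j - 1) * [:1, -1:] ^ (k - 1 - j)"]
    by (simp add: bernstein_poly_def)
qed (auto simp: bernstein_poly_def)

lemma coeff_bernstein_poly_top:
  assumes "1 \<le> j" "j < k"
  shows "coeff (bernstein_poly k j) (k - 2) = (-1) ^ (k - 1 - j) / (fact (j - 1) * fact (k - 1 - j))"
proof -
  have "coeff ([:1, -1:] ^ n :: real poly) n = (-1) ^ n" for n
  proof -
    have "coeff ([:1, -1:] ^ n :: real poly) n = lead_coeff ([:1, -1:] ^ n :: real poly)"
      by (simp add: degree_power_eq)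
    then show ?thesis by (simp add: lead_coeff_power)
  qed
  moreover have "k - 2 - (j - 1) = k - 1 - j" "\<not> k - 2 < j - 1" using assms by auto
  ultimately show ?thesis using assms by (simp add: coeff_bernstein_poly)
qed

lemma bernstein_poly_lin_indep:
  assumes zero: "(\<Sum>i\<in>{1..<k}. smult (c i) (bernstein_poly k i)) = 0"
    and j: "j \<in> {1..<k}"
  shows "c j = 0"
  using j
proof (induction j rule: less_induct)
  case (less j)
  have "(\<Sum>i\<in>{1..<k}. c i * coeff (bernstein_poly k i) (j - 1))
      = (\<Sum>i\<in>{1..<k}. if i = j then c j * coeff (bernstein_poly k j) (j - 1) else 0)"
  proof (rule sum.cong)
    fix i assume i: "i \<in> {1..<k}"
    show "c i * coeff (bernstein_poly k i) (j - 1) = (if i = j then c j * coeff (bernstein_poly k j) (j - 1) else 0)"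
      using less.IH[OF _ i] less.prems i by (cases i j rule: linorder_cases) (auto simp: coeff_bernstein_poly)
  qed simp
  also have "\<dots> = c j * coeff (bernstein_poly k j) (j - 1)"
    using less.prems by simp
  finally have "c j * coeff (bernstein_poly k j) (j - 1) = 0"
    using arg_cong[OF zero, of "\<lambda>p. coeff p (j - 1)"] by (simp add: coeff_sum)
  then show ?case
    using coeff_bernstein_poly_lowest_neq_0 less.prems by auto
qed

lemma sum_smult_grad_basis:
  "(\<Sum>m\<in>{1..k}. smult (x m) (grad_basis k m))
     = (\<Sum>j\<in>{1..<k}. smult (x j - x (Suc j)) (bernstein_poly k j))"
proof (cases k)
  case 0
  then show ?thesis by simp
next
  case (Suc n)
  have upper: "(\<Sum>m\<in>{1..k}. smult (x m) (bernstein_poly k m)) = (\<Sum>m\<in>{1..<k}. smult (x m) (bernstein_poly k m))"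
    using Suc by (simp add: atLeastLessThanSuc_atLeastAtMost[symmetric] bernstein_poly_def)
  have "(\<Sum>m\<in>{1..k}. smult (x m) (bernstein_poly k (m - 1)))
      = (\<Sum>m\<in>{Suc 0..<Suc k}. smult (x m) (bernstein_poly k (m - 1)))"
    by (simp add: atLeastLessThanSuc_atLeastAtMost)
  also have "\<dots> = (\<Sum>j\<in>{0..<k}. smult (x (Suc j)) (bernstein_poly k j))"
    by (subst sum.shift_bounds_Suc_ivl) simp
  also have "\<dots> = (\<Sum>j\<in>{1..<k}. smult (x (Suc j)) (bernstein_poly k j))"
    using Suc by (simp add: sum.atLeast_Suc_lessThan bernstein_poly_def)
  finally have lower: "(\<Sum>m\<in>{1..k}. smult (x m) (bernstein_poly k (m - 1)))
      = (\<Sum>j\<in>{1..<k}. smult (x (Suc j)) (bernstein_poly k j))" .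
  show ?thesis
    by (simp only: grad_basis_def smult_diff_right smult_diff_left sum_subtractf upper lower)
qed

lemma grad_basis_comb_eq_0_imp_const:
  assumes "(\<Sum>m\<in>{1..k}. smult (x m) (grad_basis k m)) = 0" and "m \<in> {1..k}"
  shows "x m = x 1"
proof -
  have "1 \<le> m" "m \<le> k" using assms(2) by auto
  then show ?thesis
  proof (induction m rule: dec_induct)
    case (step n)
    have "(\<Sum>j\<in>{1..<k}. smult (x j - x (Suc j)) (bernstein_poly k j)) = 0"
      using assms(1) by (simp only: sum_smult_grad_basis)
    then have "x n - x (Suc n) = 0"
      using bernstein_poly_lin_indep[of "\<lambda>j. x j - x (Suc j)" k n] step by simp
    with step show ?case by simp
  qed simp
qed

lemma sum_grad_basis: "(\<Sum>m\<in>{1..k}. grad_basis k m) = 0"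
  using sum_smult_grad_basis[of "\<lambda>_. 1" k] by simp

lemma grad_basis_comb_permuted_eq_0_imp_const:
  assumes \<sigma>: "\<sigma> permutes {1..k}"
    and zero: "(\<Sum>m\<in>{1..k}. smult (x m) (grad_basis k (\<sigma> m))) = 0" and m: "m \<in> {1..k}"
  shows "x m = x 1"
proof -
  have "(\<Sum>j\<in>{1..k}. smult (x (inv \<sigma> j)) (grad_basis k j)) = 0"
    using zero sum.reindex_bij_betw[OF permutes_imp_bij[OF \<sigma>], of "\<lambda>j. smult (x (inv \<sigma> j)) (grad_basis k j)"]
    by (simp add: permutes_inverses(2)[OF \<sigma>])
  then have "x (inv \<sigma> j) = x (inv \<sigma> 1)" if "j \<in> {1..k}" for j
    using grad_basis_comb_eq_0_imp_const[of "\<lambda>j. x (inv \<sigma> j)", OF _ that] by simp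
  moreover have "\<sigma> m \<in> {1..k}" "\<sigma> 1 \<in> {1..k}"
    using m by (subst permutes_in_image[OF \<sigma>], simp)+
  ultimately show ?thesis
    by (metis permutes_inverses(2)[OF \<sigma>])
qed

lemma degree_grad_basis_le: "degree (grad_basis k m) \<le> k - 2"
  unfolding grad_basis_def by (intro degree_diff_le degree_bernstein_poly_le)

lemma poly_eq_0_if_zero_on_infinite:
  fixes p :: "'a::idom poly"
  assumes "\<And>x. x \<in> A \<Longrightarrow> poly p x = 0" and "infinite A"
  shows "p = 0"
proof (rule ccontr)
  assume "p \<noteq> 0"
  then have "finite {x. poly p x = 0}" by (rule poly_roots_finite)
  moreover have "A \<subseteq> {x. poly p x = 0}" using assms(1) by auto
  ultimately show False using assms(2) finite_subset by blast
qed

(* The left-hand side is the derivative of a ^ (m - 1) * (1 - a) ^ (k - m) / ((m - 1)! * (k - m)!). *)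
lemma poly_grad_basis:
  assumes a: "0 < a" "a < 1" and m: "m \<in> {1..k}"
  shows "(real (k - m) / (1 - a) - real (m - 1) / a) * (a ^ (m - 1) * (1 - a) ^ (k - m))
           / (fact (m - 1) * fact (k - m)) = poly (grad_basis k m) a"
proof -
  have "1 - a \<noteq> 0" "a \<noteq> 0" using a by auto
  have "real (k - m) / (1 - a) * (a ^ (m - 1) * (1 - a) ^ (k - m)) / (fact (m - 1) * fact (k - m))
      = poly (bernstein_poly k m) a"
  proof (cases "m < k")
    case True
    then obtain n where n: "k - m = Suc n" by (metis Suc_diff_Suc)
    then have "k - 1 - m = n" by simp
    then have "poly (bernstein_poly k m) a = a ^ (m - 1) * (1 - a) ^ n / (fact (m - 1) * fact n)"
      using True m by (simp add: poly_bernstein_poly)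
    moreover have "real (Suc n) / (1 - a) * (a ^ (m - 1) * (1 - a) ^ Suc n) / (fact (m - 1) * fact (Suc n))
        = a ^ (m - 1) * (1 - a) ^ n / (fact (m - 1) * fact n)"
      using \<open>1 - a \<noteq> 0\<close> by (simp add: fact_Suc power_Suc field_simps del: of_nat_Suc)
    ultimately show ?thesis by (simp only: n)
  qed (use m in \<open>simp add: poly_bernstein_poly\<close>)
  moreover have "real (m - 1) / a * (a ^ (m - 1) * (1 - a) ^ (k - m)) / (fact (m - 1) * fact (k - m))
      = poly (bernstein_poly k (m - 1)) a"
  proof (cases "2 \<le> m")
    case True
    then obtain n where n: "m - 1 = Suc n" by (metis Suc_diff_Suc Suc_1 Suc_le_lessD)
    have "1 \<le> m - 1 \<and> m - 1 < k" "m - 1 - 1 = n" "k - 1 - (m - 1) = k - m" using True m n by auto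
    then have "poly (bernstein_poly k (m - 1)) a = a ^ n * (1 - a) ^ (k - m) / (fact n * fact (k - m))"
      by (simp only: poly_bernstein_poly simp_thms if_True)
    moreover have "real (Suc n) / a * (a ^ Suc n * (1 - a) ^ (k - m)) / (fact (Suc n) * fact (k - m))
        = a ^ n * (1 - a) ^ (k - m) / (fact n * fact (k - m))"
      using \<open>a \<noteq> 0\<close> by (simp add: fact_Suc power_Suc field_simps del: of_nat_Suc)
    ultimately show ?thesis by (simp only: n)
  qed (use m in \<open>simp add: poly_bernstein_poly\<close>)
  ultimately show ?thesis
    by (simp add: grad_basis_def left_diff_distrib diff_divide_distrib)
qed

lemma grad_poly_eq_tensor:
  assumes \<pi>: "\<pi> permutes {1..k}" and ab: "0 < a" "a < 1" "0 < b" "b < 1"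
  shows "grad_poly (k, \<pi>) a b = fact k * (\<Sum>m\<in>{1..k}. poly (grad_basis k m) a * poly (grad_basis k (\<pi> m)) b)"
proof -
  have "(real (k - m) / (1 - a) - real (m - 1) / a) * (real (k - \<pi> m) / (1 - b) - real (\<pi> m - 1) / b)
      * (a ^ (m - 1) * (1 - a) ^ (k - m) * b ^ (\<pi> m - 1) * (1 - b) ^ (k - \<pi> m))
      / (fact (m - 1) * fact (k - m) * fact (\<pi> m - 1) * fact (k - \<pi> m))
      = poly (grad_basis k m) a * poly (grad_basis k (\<pi> m)) b" if m: "m \<in> {1..k}" for m
  proof -
    have \<pi>m: "\<pi> m \<in> {1..k}" using m by (subst permutes_in_image[OF \<pi>])
    show ?thesis
      unfolding poly_grad_basis[OF ab(1,2) m, symmetric] poly_grad_basis[OF ab(3,4) \<pi>m, symmetric]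
      by (simp add: mult_ac)
  qed
  then show ?thesis
    unfolding grad_poly_def Let_def fst_conv snd_conv
    by (intro arg_cong[where f = "\<lambda>s. fact k * s"] sum.cong refl)
qed

section \<open>Combinations of permutation matrices\<close>

definition perm_matrix_comb :: "kperm set \<Rightarrow> (kperm \<Rightarrow> real) \<Rightarrow> nat \<Rightarrow> nat \<Rightarrow> real" where
  "perm_matrix_comb S t m j = (\<Sum>p\<in>S. t p * of_bool (snd p m = j))"

lemma perm_matrix_comb_row:
  assumes "finite S" "\<forall>p\<in>S. snd p permutes {1..k}" "m \<in> {1..k}"
  shows "(\<Sum>j\<in>{1..k}. perm_matrix_comb S t m j * f j) = (\<Sum>p\<in>S. t p * f (snd p m))"
proof -
  have "(\<Sum>j\<in>{1..k}. perm_matrix_comb S t m j * f j) = (\<Sum>p\<in>S. t p * (\<Sum>j\<in>{1..k}. of_bool (snd p m = j) * f j))"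
    unfolding perm_matrix_comb_def sum_distrib_right sum_distrib_left
    by (subst sum.swap) (simp add: mult_ac)
  also have "\<dots> = (\<Sum>p\<in>S. t p * f (snd p m))"
  proof (intro sum.cong refl)
    fix p assume "p \<in> S"
    then have "snd p m \<in> {1..k}" using assms by (subst permutes_in_image) auto
    then show "t p * (\<Sum>j\<in>{1..k}. of_bool (snd p m = j) * f j) = t p * f (snd p m)"
      by (simp add: sum.delta if_distrib cong: if_cong)
  qed
  finally show ?thesis .
qed

lemma perm_matrix_comb_col:
  assumes "finite S" "\<forall>p\<in>S. snd p permutes {1..k}" "j \<in> {1..k}"
  shows "(\<Sum>m\<in>{1..k}. perm_matrix_comb S t m j) = (\<Sum>p\<in>S. t p)"
proof -
  have "(\<Sum>m\<in>{1..k}. of_bool (snd p m = j) :: real) = 1" if p: "p \<in> S" for p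
  proof -
    have "snd p m = j \<longleftrightarrow> inv (snd p) j = m" for m
      using permutes_inv_eq[of "snd p" "{1..k}"] assms(2) p by simp
    moreover have "inv (snd p) j \<in> {1..k}"
      using assms p by (subst permutes_in_image[OF permutes_inv]) auto
    ultimately show ?thesis by (simp add: sum.delta')
  qed
  then show ?thesis
    unfolding perm_matrix_comb_def by (subst sum.swap) (simp add: sum_distrib_left[symmetric])
qed

lemma grad_basis_tensor_eq_0_imp_additive:
  assumes zero: "\<And>a b. 0 < a \<Longrightarrow> a < 1 \<Longrightarrow> 0 < b \<Longrightarrow> b < 1 \<Longrightarrow>
      (\<Sum>m\<in>{1..k}. \<Sum>j\<in>{1..k}. X m j * poly (grad_basis k m) a * poly (grad_basis k j) b) = 0"
    and m: "m \<in> {1..k}" and j: "j \<in> {1..k}"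
  shows "X m j + X 1 1 = X m 1 + X 1 j"
proof -
  define y where "y b m = (\<Sum>j\<in>{1..k}. X m j * poly (grad_basis k j) b)" for b m
  have "y b m = y b 1" if b: "0 < b" "b < 1" for b
  proof -
    have "(\<Sum>m\<in>{1..k}. smult (y b m) (grad_basis k m)) = 0"
      using zero b by (intro poly_eq_0_if_zero_on_infinite[where A = "{0<..<1}"])
        (simp_all add: poly_sum y_def sum_distrib_left mult_ac)
    then show ?thesis
      using grad_basis_comb_eq_0_imp_const[of "y b", OF _ m] by simp
  qed
  then have "(\<Sum>j\<in>{1..k}. smult (X m j - X 1 j) (grad_basis k j)) = 0"
    by (intro poly_eq_0_if_zero_on_infinite[where A = "{0<..<1}"])
      (simp_all add: poly_sum y_def left_diff_distrib sum_subtractf)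
  from grad_basis_comb_eq_0_imp_const[OF this j] show ?thesis by simp
qed

lemma additive_matrix_const_if_equal_line_sums:
  fixes X :: "nat \<Rightarrow> nat \<Rightarrow> real"
  assumes additive: "\<And>m j. m \<in> {1..k} \<Longrightarrow> j \<in> {1..k} \<Longrightarrow> X m j + X 1 1 = X m 1 + X 1 j"
    and rows: "\<And>m. m \<in> {1..k} \<Longrightarrow> (\<Sum>j\<in>{1..k}. X m j) = T"
    and cols: "\<And>j. j \<in> {1..k} \<Longrightarrow> (\<Sum>m\<in>{1..k}. X m j) = T"
    and m: "m \<in> {1..k}" and j: "j \<in> {1..k}"
  shows "real k * X m j = T"
proof -
  have one: "1 \<in> {1..k}" using m by simp
  have same_row: "X m' j' = X 1 j'" if m': "m' \<in> {1..k}" and j': "j' \<in> {1..k}" for m' j'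
  proof -
    have shift: "X m' j'' = X 1 j'' + (X m' 1 - X 1 1)" if "j'' \<in> {1..k}" for j''
      using additive[OF m' that] by linarith
    have "T = (\<Sum>j\<in>{1..k}. X m' j)" using rows[OF m'] by simp
    also have "\<dots> = (\<Sum>j\<in>{1..k}. X 1 j + (X m' 1 - X 1 1))"
      by (rule sum.cong[OF refl shift])
    also have "\<dots> = T + real k * (X m' 1 - X 1 1)"
      using rows[OF one] by (simp add: sum.distrib)
    finally have "X m' 1 = X 1 1" using m by simp
    then show ?thesis using additive[OF m' j'] by simp
  qed
  have "T = (\<Sum>m\<in>{1..k}. X m j)" using cols[OF j] by simp
  also have "\<dots> = (\<Sum>m\<in>{1..k}. X 1 j)" by (rule sum.cong[OF refl same_row[OF _ j]])
  finally show ?thesis using same_row[OF m j] by simp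
qed

lemma grad_comb_eq_tensor:
  assumes S: "finite S" "\<forall>p\<in>S. fst p = k \<and> snd p permutes {1..k}"
    and ab: "0 < a" "a < 1" "0 < b" "b < 1"
  shows "(\<Sum>p\<in>S. t p * grad_poly p a b) = fact k *
    (\<Sum>m\<in>{1..k}. \<Sum>j\<in>{1..k}. perm_matrix_comb S t m j * poly (grad_basis k m) a * poly (grad_basis k j) b)"
proof -
  have "(\<Sum>p\<in>S. t p * grad_poly p a b)
      = (\<Sum>p\<in>S. t p * (fact k * (\<Sum>m\<in>{1..k}. poly (grad_basis k m) a * poly (grad_basis k (snd p m)) b)))"
  proof (intro sum.cong refl)
    fix p assume "p \<in> S"
    moreover obtain k' \<pi> where "p = (k', \<pi>)" by fastforce
    ultimately show "t p * grad_poly p a b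
        = t p * (fact k * (\<Sum>m\<in>{1..k}. poly (grad_basis k m) a * poly (grad_basis k (snd p m)) b))"
      using S(2) grad_poly_eq_tensor[OF _ ab] by auto
  qed
  also have "\<dots> = fact k * (\<Sum>p\<in>S. \<Sum>m\<in>{1..k}. poly (grad_basis k m) a * (t p * poly (grad_basis k (snd p m)) b))"
    by (simp only: sum_distrib_left mult.left_commute)
  also have "\<dots> = fact k * (\<Sum>m\<in>{1..k}. poly (grad_basis k m) a * (\<Sum>p\<in>S. t p * poly (grad_basis k (snd p m)) b))"
    by (simp only: sum.swap[of _ S] sum_distrib_left)
  also have "\<dots> = fact k *
      (\<Sum>m\<in>{1..k}. \<Sum>j\<in>{1..k}. perm_matrix_comb S t m j * poly (grad_basis k m) a * poly (grad_basis k j) b)"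
  proof -
    have perms: "\<forall>p\<in>S. snd p permutes {1..k}" using S(2) by blast
    have inner: "(\<Sum>j\<in>{1..k}. perm_matrix_comb S t m j * poly (grad_basis k m) a * poly (grad_basis k j) b)
        = poly (grad_basis k m) a * (\<Sum>p\<in>S. t p * poly (grad_basis k (snd p m)) b)"
      if "m \<in> {1..k}" for m
    proof -
      have "(\<Sum>j\<in>{1..k}. perm_matrix_comb S t m j * poly (grad_basis k m) a * poly (grad_basis k j) b)
          = poly (grad_basis k m) a * (\<Sum>j\<in>{1..k}. perm_matrix_comb S t m j * poly (grad_basis k j) b)"
        by (simp add: sum_distrib_left mult_ac)
      also have "\<dots> = poly (grad_basis k m) a * (\<Sum>p\<in>S. t p * poly (grad_basis k (snd p m)) b)"
        using perm_matrix_comb_row[OF S(1) perms that] by simp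
      finally show ?thesis .
    qed
    show ?thesis
      by (rule arg_cong[where f = "\<lambda>s. fact k * s"], rule sum.cong[OF refl inner, symmetric])
  qed
  finally show ?thesis .
qed

lemma perm_matrix_comb_eq_0_if_card_less:
  assumes S: "finite S" "\<forall>p\<in>S. snd p permutes {1..k}" and card: "card S < k"
    and additive: "\<And>m j. m \<in> {1..k} \<Longrightarrow> j \<in> {1..k} \<Longrightarrow>
      perm_matrix_comb S t m j + perm_matrix_comb S t 1 1 = perm_matrix_comb S t m 1 + perm_matrix_comb S t 1 j"
    and m: "m \<in> {1..k}" and j: "j \<in> {1..k}"
  shows "perm_matrix_comb S t m j = 0"
proof -
  have const: "real k * perm_matrix_comb S t m' j' = (\<Sum>p\<in>S. t p)" if "m' \<in> {1..k}" "j' \<in> {1..k}" for m' j'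
    using additive_matrix_const_if_equal_line_sums[of k "perm_matrix_comb S t", OF additive _ _ that]
      perm_matrix_comb_row[OF S, of _ t "\<lambda>_. 1"] perm_matrix_comb_col[OF S] by simp
  have "\<not> {1..k} \<subseteq> (\<lambda>p. snd p 1) ` S"
  proof
    assume "{1..k} \<subseteq> (\<lambda>p. snd p 1) ` S"
    then have "card {1..k} \<le> card S"
      using S(1) card_mono card_image_le order.trans by (metis finite_imageI)
    with card show False by simp
  qed
  then obtain j0 where j0: "j0 \<in> {1..k}" "j0 \<notin> (\<lambda>p. snd p 1) ` S" by blast
  then have "perm_matrix_comb S t 1 j0 = 0"
    unfolding perm_matrix_comb_def by (intro sum.neutral) auto
  moreover have "1 \<in> {1..k}" using card by simp
  ultimately have "(\<Sum>p\<in>S. t p) = 0" using const[OF _ j0(1)] by force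
  then show ?thesis using const[OF m j] card by simp
qed

lemma four_le_card_if_pointwise_covered:
  fixes f :: "'a \<Rightarrow> 'b \<Rightarrow> 'c"
  assumes T: "finite T" "p \<in> T" and I: "i0 \<in> I"
    and covered: "\<And>p i. p \<in> T \<Longrightarrow> i \<in> I \<Longrightarrow> \<exists>q\<in>T - {p}. f q i = f p i"
    and separated: "\<And>p q. p \<in> T \<Longrightarrow> q \<in> T \<Longrightarrow> p \<noteq> q \<Longrightarrow> \<exists>i\<in>I. f p i \<noteq> f q i"
  shows "4 \<le> card T"
proof -
  obtain q where q: "q \<in> T" "q \<noteq> p" using covered[OF T(2) I] by blast
  then obtain i where i: "i \<in> I" "f p i \<noteq> f q i" using separated T(2) by metis
  obtain r where r: "r \<in> T" "r \<noteq> p" "f r i = f p i" using covered[OF T(2) i(1)] by blast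
  obtain s where s: "s \<in> T" "s \<noteq> q" "f s i = f q i" using covered[OF q(1) i(1)] by blast
  have "r \<noteq> q" "s \<noteq> p" "s \<noteq> r" using r(3) s(3) i(2) by auto
  then have "card {p, q, r, s} = 4" using q(2) r(2) s(2) by simp
  moreover have "{p, q, r, s} \<subseteq> T" using T q r s by auto
  ultimately show ?thesis using card_mono[OF T(1)] by metis
qed

lemma permutes_neq_imp_ex_diff:
  assumes "\<sigma> permutes A" "\<tau> permutes A" "\<sigma> \<noteq> \<tau>"
  obtains i where "i \<in> A" "\<sigma> i \<noteq> \<tau> i"
proof -
  from assms(3) obtain i where i: "\<sigma> i \<noteq> \<tau> i" by (auto simp: fun_eq_iff)
  moreover have "i \<in> A" using i permutes_not_in[OF assms(1)] permutes_not_in[OF assms(2)] by fastforce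
  ultimately show ?thesis using that by blast
qed

lemma perm_matrix_comb_eq_0_imp_zero:
  assumes S: "finite S" "\<forall>p\<in>S. fst p = k \<and> snd p permutes {1..k}" "card S \<le> 3" "0 < k"
    and zero: "\<And>m j. m \<in> {1..k} \<Longrightarrow> j \<in> {1..k} \<Longrightarrow> perm_matrix_comb S t m j = 0"
    and p: "p \<in> S"
  shows "t p = 0"
proof (rule ccontr)
  assume "t p \<noteq> 0"
  define T where "T = {q\<in>S. t q \<noteq> 0}"
  have covered: "\<exists>q\<in>T - {p'}. snd q i = snd p' i" if p': "p' \<in> T" and i: "i \<in> {1..k}" for p' i
  proof (rule ccontr)
    assume uncovered: "\<not> ?thesis"
    have "snd p' i \<in> {1..k}" using S(2) p' i by (subst permutes_in_image) (auto simp: T_def)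
    then have "0 = perm_matrix_comb S t i (snd p' i)" using zero i by simp
    also have "\<dots> = (\<Sum>q\<in>S. if q = p' then t p' else 0)"
      unfolding perm_matrix_comb_def using uncovered by (intro sum.cong refl) (auto simp: T_def)
    also have "\<dots> = t p'" using p' S(1) by (simp add: T_def)
    finally show False using p' by (simp add: T_def)
  qed
  have separated: "\<exists>i\<in>{1..k}. snd p' i \<noteq> snd q i" if "p' \<in> T" "q \<in> T" "p' \<noteq> q" for p' q
  proof -
    have "snd p' \<noteq> snd q" "snd p' permutes {1..k}" "snd q permutes {1..k}"
      using that S(2) prod_eqI[of p' q] by (auto simp: T_def)
    then show ?thesis using permutes_neq_imp_ex_diff by metis
  qed
  have "4 \<le> card T"
    using four_le_card_if_pointwise_covered[of T p 1 "{1..k}" snd] covered separated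
      S(1,4) p \<open>t p \<noteq> 0\<close> by (simp add: T_def)
  moreover have "card T \<le> card S" using S(1) by (simp add: T_def card_mono)
  ultimately show False using S(3) by simp
qed

lemma grad_comb_eq_0_imp_zero_same_order:
  assumes S: "finite S" "\<forall>p\<in>S. fst p = k \<and> snd p permutes {1..k}" "card S < k" "card S \<le> 3"
    and zero: "\<And>a b. 0 < a \<Longrightarrow> a < 1 \<Longrightarrow> 0 < b \<Longrightarrow> b < 1 \<Longrightarrow> (\<Sum>p\<in>S. t p * grad_poly p a b) = 0"
    and p: "p \<in> S"
  shows "t p = 0"
proof -
  have tensor_zero: "(\<Sum>m\<in>{1..k}. \<Sum>j\<in>{1..k}.
      perm_matrix_comb S t m j * poly (grad_basis k m) a * poly (grad_basis k j) b) = 0"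
    if "0 < a" "a < 1" "0 < b" "b < 1" for a b
    using zero[OF that] grad_comb_eq_tensor[OF S(1,2) that, of t] by simp
  have additive: "perm_matrix_comb S t m j + perm_matrix_comb S t 1 1
      = perm_matrix_comb S t m 1 + perm_matrix_comb S t 1 j" if "m \<in> {1..k}" "j \<in> {1..k}" for m j
    using grad_basis_tensor_eq_0_imp_additive[where X = "perm_matrix_comb S t", OF tensor_zero that] .
  have "\<forall>p\<in>S. snd p permutes {1..k}" using S(2) by simp
  then have "perm_matrix_comb S t m j = 0" if "m \<in> {1..k}" "j \<in> {1..k}" for m j
    using perm_matrix_comb_eq_0_if_card_less[OF S(1) _ S(3) additive that] by simp
  then show ?thesis
    using perm_matrix_comb_eq_0_imp_zero[OF S(1,2,4) _ _ p] S(3) by simp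
qed

lemma not_lin_dep_same_order:
  assumes "finite S" "\<forall>p\<in>S. is_kperm p \<and> fst p = k" "card S < k" "card S \<le> 3"
  shows "\<not> lin_dep S"
proof
  assume "lin_dep S"
  then obtain t p where p: "p \<in> S" "t p \<noteq> 0"
    and zero: "\<forall>a b. 0 < a \<and> a < 1 \<and> 0 < b \<and> b < 1 \<longrightarrow> (\<Sum>p\<in>S. t p * grad_poly p a b) = 0"
    unfolding lin_dep_def by blast
  have "\<forall>p\<in>S. fst p = k \<and> snd p permutes {1..k}" using assms(2) by (auto simp: is_kperm_def)
  with assms zero p show False
    using grad_comb_eq_0_imp_zero_same_order[of S k t p] by auto
qed

lemma card_le_fact_if_same_order:
  assumes "\<forall>p\<in>S. is_kperm p \<and> fst p = k"
  shows "card S \<le> fact k"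
proof -
  have "S \<subseteq> Pair k ` {\<pi>. \<pi> permutes {1..k}}"
    using assms by (force simp: is_kperm_def)
  moreover have "finite {\<pi>. \<pi> permutes {1..k}}" by (simp add: finite_permutations)
  ultimately have "card S \<le> card {\<pi>. \<pi> permutes {1..k}}"
    by (meson card_image_le card_mono finite_imageI order.trans)
  also have "\<dots> = fact k" by (simp add: card_permutations)
  finally show ?thesis .
qed

lemma lin_dep_card_3_same_order_imp_order_3:
  assumes "finite S" "card S = 3" "\<forall>p\<in>S. is_kperm p \<and> fst p = k" "1 < k" "lin_dep S"
  shows "k = 3"
proof -
  have "k \<noteq> 2" using card_le_fact_if_same_order[OF assms(3)] assms(2) by (auto simp: numeral_2_eq_2)
  moreover have "\<not> 3 < k" using not_lin_dep_same_order[OF assms(1,3)] assms(2,5) by auto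
  ultimately show ?thesis using assms(4) by simp
qed

section \<open>Permutations of different orders\<close>

lemma coeff_grad_basis_top_not_const:
  assumes "3 \<le> l"
  shows "\<exists>m\<in>{1..l}. coeff (grad_basis l m) (l - 2) \<noteq> coeff (grad_basis l 1) (l - 2)"
proof (rule ccontr)
  assume "\<not> ?thesis"
  then have const: "coeff (grad_basis l m) (l - 2) = coeff (grad_basis l 1) (l - 2)" if "m \<in> {1..l}" for m
    using that by blast
  have "0 = coeff (\<Sum>m\<in>{1..l}. grad_basis l m) (l - 2)" unfolding sum_grad_basis by simp
  also have "\<dots> = (\<Sum>m\<in>{1..l}. coeff (grad_basis l 1) (l - 2))"
    unfolding coeff_sum by (rule sum.cong[OF refl const])
  moreover have "coeff (grad_basis l 1) (l - 2) = (-1) ^ (l - 2) / fact (l - 2)"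
    using assms coeff_bernstein_poly_top[of 1 l] by (simp add: grad_basis_def bernstein_poly_def numeral_2_eq_2)
  ultimately show False using assms by simp
qed

lemma grad_comb_eq_0_imp_zero_two_orders:
  assumes p: "fst p = k" "snd p permutes {1..k}" and q: "fst q = l" "snd q permutes {1..l}"
    and kl: "2 \<le> k" "k < l"
    and zero: "\<And>a b. 0 < a \<Longrightarrow> a < 1 \<Longrightarrow> 0 < b \<Longrightarrow> b < 1 \<Longrightarrow>
      t p * grad_poly p a b + t q * grad_poly q a b = 0"
  shows "t q = 0"
proof (rule ccontr)
  assume "t q \<noteq> 0"
  define c where "c m = coeff (grad_basis l m) (l - 2)" for m
  have "(\<Sum>m\<in>{1..l}. smult (c m) (grad_basis l (snd q m))) = 0"
  proof (rule poly_eq_0_if_zero_on_infinite[where A = "{0<..<1}"])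
    fix b :: real assume "b \<in> {0<..<1}"
    then have b: "0 < b" "b < 1" by simp_all
    define Q where "Q = smult (t p * fact k) (\<Sum>m\<in>{1..k}. smult (poly (grad_basis k (snd p m)) b) (grad_basis k m))
      + smult (t q * fact l) (\<Sum>m\<in>{1..l}. smult (poly (grad_basis l (snd q m)) b) (grad_basis l m))"
    have "Q = 0"
    proof (rule poly_eq_0_if_zero_on_infinite[where A = "{0<..<1}"])
      fix a :: real assume "a \<in> {0<..<1}"
      then have a: "0 < a" "a < 1" by simp_all
      have "p = (k, snd p)" "q = (l, snd q)" using p(1) q(1) by auto
      then have "poly Q a = t p * grad_poly p a b + t q * grad_poly q a b"
        unfolding Q_def using grad_poly_eq_tensor[OF p(2) a b] grad_poly_eq_tensor[OF q(2) a b]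
        by (simp add: poly_sum sum_distrib_left mult_ac)
      then show "poly Q a = 0" using zero[OF a b] by simp
    qed simp
    moreover have "coeff (grad_basis k m) (l - 2) = 0" for m
      using degree_grad_basis_le[of k m] kl by (intro coeff_eq_0) linarith
    then have "coeff Q (l - 2) = t q * fact l * (\<Sum>m\<in>{1..l}. c m * poly (grad_basis l (snd q m)) b)"
      by (simp add: Q_def coeff_sum c_def sum_distrib_left mult_ac)
    ultimately have "t q * fact l * (\<Sum>m\<in>{1..l}. c m * poly (grad_basis l (snd q m)) b) = 0"
      by simp
    then show "poly (\<Sum>m\<in>{1..l}. smult (c m) (grad_basis l (snd q m))) b = 0"
      using \<open>t q \<noteq> 0\<close> by (simp add: poly_sum)
  qed simp
  then have "c m = c 1" if "m \<in> {1..l}" for m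
    using grad_basis_comb_permuted_eq_0_imp_const[OF q(2) _ that] by simp
  moreover obtain m where "m \<in> {1..l}" "c m \<noteq> c 1"
    using coeff_grad_basis_top_not_const[of l] kl unfolding c_def by auto
  ultimately show False by blast
qed

lemma not_lin_dep_two_orders:
  assumes "is_kperm p" "is_kperm q" "2 \<le> fst p" "fst p < fst q"
  shows "\<not> lin_dep {p, q}"
proof
  assume "lin_dep {p, q}"
  then obtain t where nonzero: "t p \<noteq> 0 \<or> t q \<noteq> 0"
    and zero: "\<forall>a b. 0 < a \<and> a < 1 \<and> 0 < b \<and> b < 1 \<longrightarrow> (\<Sum>x\<in>{p, q}. t x * grad_poly x a b) = 0"
    unfolding lin_dep_def by blast
  have "p \<noteq> q" using assms(4) by auto
  with zero have pair: "t p * grad_poly p a b + t q * grad_poly q a b = 0"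
    if "0 < a" "a < 1" "0 < b" "b < 1" for a b
    using that by simp
  have perms: "snd p permutes {1..fst p}" "snd q permutes {1..fst q}"
    using assms(1,2) unfolding is_kperm_def by simp_all
  have "t q = 0"
    using grad_comb_eq_0_imp_zero_two_orders[OF refl perms(1) refl perms(2) assms(3,4) pair] .
  then have "(\<Sum>x\<in>{p}. t x * grad_poly x a b) = 0" if "0 < a" "a < 1" "0 < b" "b < 1" for a b
    using pair[OF that] by simp
  then have "t p = 0"
    using grad_comb_eq_0_imp_zero_same_order[of "{p}" "fst p" t p] perms(1) assms(3) by simp
  with \<open>t q = 0\<close> show False using nonzero by simp
qed

lemma lin_dep_pair_imp_order_2:
  assumes "is_kperm x" "is_kperm y" "1 < fst x" "1 < fst y" "x \<noteq> y" "lin_dep {x, y}"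
  shows "fst x = 2 \<and> fst y = 2"
proof -
  consider "fst x = fst y" | "fst x < fst y" | "fst y < fst x" by linarith
  then show ?thesis
  proof cases
    case 1
    then show ?thesis using assms not_lin_dep_same_order[of "{x, y}" "fst x"] by fastforce
  next
    case 2
    then show ?thesis using assms not_lin_dep_two_orders[of x y] by simp
  next
    case 3
    then show ?thesis using assms not_lin_dep_two_orders[of y x] by (simp add: insert_commute)
  qed
qed

theorem lemma12:
  fixes S :: "kperm set"
  assumes "finite S"
    and "\<forall>p\<in>S. is_kperm p"
    and "\<forall>p\<in>S. fst p > 1"
    and "lin_dep S"
  shows "card S \<noteq> 1
    \<and> (card S = 2 \<longrightarrow> (\<forall>p\<in>S. fst p = 2))
    \<and> (card S = 3 \<and> (\<exists>k. \<forall>p\<in>S. fst p = k) \<longrightarrow> (\<forall>p\<in>S. fst p = 3))"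
proof (intro conjI impI)
  show "card S \<noteq> 1"
  proof
    assume "card S = 1"
    then obtain x where "S = {x}" by (rule card_1_singletonE)
    then show False using assms not_lin_dep_same_order[of S "fst x"] by simp
  qed
next
  assume "card S = 2"
  then obtain x y where "S = {x, y}" "x \<noteq> y" by (auto simp: card_2_iff)
  then show "\<forall>p\<in>S. fst p = 2" using assms lin_dep_pair_imp_order_2[of x y] by simp
next
  assume "card S = 3 \<and> (\<exists>k. \<forall>p\<in>S. fst p = k)"
  then obtain k where three: "card S = 3" and k: "\<forall>p\<in>S. fst p = k" by blast
  then obtain p where "p \<in> S" by (metis card.empty all_not_in_conv zero_neq_numeral)
  then have "1 < k" using assms(3) k by metis
  then show "\<forall>p\<in>S. fst p = 3"
    using lin_dep_card_3_same_order_imp_order_3[OF assms(1) three _ _ assms(4)] assms(2) k by simp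
qed

end
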